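(* The Baumslag–Solitar group $\mathrm{BS}(2,3)=\langle a,b\mid b^{-1}a^2ba^{-3}\rangle$ is not Frobenius-stable.
   Context: Fix a non-principal ultrafilter $\mathcal U$ on $\mathbb N$. For a finitely presented $\Gamma=\langle S\mid R\rangle$ and a map $\varphi\colon S\to\mathrm U(k)$ (extended to the free group $\mathbb F_S$), $\mathrm{def}(\varphi)=\max_{r\in R}\|\varphi(r)-1_k\|_{\mathrm{Frob}}$ and $\mathrm{homdist}(\varphi)=\inf_{\rho\in\mathrm{Hom}(\Gamma,\mathrm U(k))}\max_{s\in S}\|\varphi(s)-\rho(s)\|_{\mathrm{Frob}}$, where $\|T\|_{\mathrm{Frob}}=\sqrt{\sum_{i,j}|T_{ij}|^2}$. $\Gamma$ is Frobenius-stable if for every sequence $(k_n)$ and maps $\varphi_n\colon S\to\mathrm U(k_n)$ with $\lim_{n\to\mathcal U}\mathrm{def}(\varphi_n)=0$ one has $\lim_{n\to\mathcal U}\mathrm{homdist}(\varphi_n)=0$. *)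

theory Defs
  imports Complex_Main "Jordan_Normal_Form.Matrix"
begin

definition nonprincipal_ultrafilter :: "nat filter \<Rightarrow> bool" where
  "nonprincipal_ultrafilter U \<longleftrightarrow>
     U \<noteq> bot \<and>
     (\<forall>P. eventually P U \<or> eventually (\<lambda>x. \<not> P x) U) \<and>
     (\<forall>m. eventually (\<lambda>x. x \<noteq> m) U)"

definition cadj :: "complex mat \<Rightarrow> complex mat" where
  "cadj A = mat (dim_col A) (dim_row A) (\<lambda>(i,j). cnj (A $$ (j,i)))"

definition unitary_mat :: "nat \<Rightarrow> complex mat \<Rightarrow> bool" where
  "unitary_mat k A \<longleftrightarrow> A \<in> carrier_mat k k \<and> A * cadj A = 1\<^sub>m k \<and> cadj A * A = 1\<^sub>m k"

definition frob_norm :: "complex mat \<Rightarrow> real" where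
  "frob_norm T = sqrt (\<Sum>i<dim_row T. \<Sum>j<dim_col T. (cmod (T $$ (i,j)))\<^sup>2)"

text \<open>Words in the free group on generators of type 's: a list of letters
  (s, inv), where inv = True means the letter s^{-1}.  A map phi from the
  generators to U(k) is extended to the free group; the inverse of a unitary
  is its conjugate transpose.\<close>
type_synonym 's word = "('s \<times> bool) list"

definition word_eval :: "nat \<Rightarrow> ('s \<Rightarrow> complex mat) \<Rightarrow> 's word \<Rightarrow> complex mat" where
  "word_eval k \<phi> w = foldr (\<lambda>(s, is_inv) M. (if is_inv then cadj (\<phi> s) else \<phi> s) * M) w (1\<^sub>m k)"

definition is_hom :: "nat \<Rightarrow> 's set \<Rightarrow> 's word list \<Rightarrow> ('s \<Rightarrow> complex mat) \<Rightarrow> bool" where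
  "is_hom k S R \<rho> \<longleftrightarrow> (\<forall>s\<in>S. unitary_mat k (\<rho> s)) \<and> (\<forall>r\<in>set R. word_eval k \<rho> r = 1\<^sub>m k)"

definition defect :: "nat \<Rightarrow> 's word list \<Rightarrow> ('s \<Rightarrow> complex mat) \<Rightarrow> real" where
  "defect k R \<phi> = Max (insert 0 ((\<lambda>r. frob_norm (word_eval k \<phi> r - 1\<^sub>m k)) ` set R))"

definition homdist :: "nat \<Rightarrow> 's set \<Rightarrow> 's word list \<Rightarrow> ('s \<Rightarrow> complex mat) \<Rightarrow> real" where
  "homdist k S R \<phi> = Inf {Max (insert 0 ((\<lambda>s. frob_norm (\<phi> s - \<rho> s)) ` S)) | \<rho>. is_hom k S R \<rho>}"

definition frobenius_stable :: "nat filter \<Rightarrow> 's set \<Rightarrow> 's word list \<Rightarrow> bool" where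
  "frobenius_stable U S R \<longleftrightarrow>
     (\<forall>(ks :: nat \<Rightarrow> nat) (\<phi>s :: nat \<Rightarrow> 's \<Rightarrow> complex mat).
        (\<forall>n. ks n \<ge> 1 \<and> (\<forall>s\<in>S. unitary_mat (ks n) (\<phi>s n s))) \<and>
        ((\<lambda>n. defect (ks n) R (\<phi>s n)) \<longlongrightarrow> 0) U
        \<longrightarrow> ((\<lambda>n. homdist (ks n) S R (\<phi>s n)) \<longlongrightarrow> 0) U)"

datatype bs_gen = Ga | Gb

definition bs23_rel :: "bs_gen word" where
  "bs23_rel = [(Gb, True), (Ga, False), (Ga, False), (Gb, False), (Ga, True), (Ga, True), (Ga, True)]"

end

theory Submission
  imports Defs "Jordan_Normal_Form.Jordan_Normal_Form_Existence"
    "Jordan_Normal_Form.Jordan_Normal_Form_Uniqueness" "HOL-Analysis.L2_Norm"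
begin

text \<open>
  For \<open>N = 6 m + 1\<close> let \<open>A\<^sub>m\<close> be diagonal with eigenvalues \<open>\<zeta>\<^sup>j\<close>, \<open>\<zeta>\<close> a primitive \<open>N\<close>-th
  root of unity, and \<open>B\<^sub>m\<close> the permutation matrix of \<open>j \<mapsto> \<sigma> j\<close> with \<open>2 \<sigma> j = 3 j\<close> mod \<open>N\<close>,
  so that \<open>A\<^sub>m\<^sup>2 B\<^sub>m = B\<^sub>m A\<^sub>m\<^sup>3\<close>.  Moving the two eigenvalues \<open>\<zeta>\<^bsup>2m\<^esup>\<close> and \<open>\<zeta>\<^bsup>3m\<^esup>\<close> by \<open>O(1/m)\<close>
  and replacing a \<open>2 \<times> 2\<close> block of \<open>B\<^sub>m\<close> by a Hadamard matrix keeps the defect \<open>O(1/m)\<close>,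
  but makes the commutator of \<open>A\<^sub>m\<close> and \<open>B\<^sub>m\<^sup>* A\<^sub>m B\<^sub>m\<close> have an entry \<open>1 - \<omega>\<close> of modulus
  \<open>\<ge> 1\<close>.  For an honest unitary representation \<open>(A, B)\<close> of \<open>BS(2,3)\<close>, on the other hand,
  \<open>A\<close> commutes with \<open>B\<^sup>* A B\<close>; as this commutator is \<open>4\<close>-Lipschitz in \<open>(A, B)\<close> for the
  Frobenius norm, every representation stays at distance \<open>\<ge> 1/8\<close> from \<open>(A\<^sub>m, B\<^sub>m)\<close>.
\<close>

lemma two_power_cube_root_of_unity_eq_1:
  fixes r :: "'a :: monoid_mult"
  assumes r3: "r ^ 3 = 1" and r2k: "r ^ (2 ^ k) = 1"
  shows "r = 1"
proof -
  have "r ^ (2 ^ k) = r ^ (3 * (2 ^ k div 3) + 2 ^ k mod 3)"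
    by simp
  also have "\<dots> = (r ^ 3) ^ (2 ^ k div 3) * r ^ (2 ^ k mod 3)"
    by (simp only: power_add power_mult)
  finally have r_mod: "r ^ (2 ^ k mod 3) = 1" using r3 r2k by simp
  have "\<not> (3::nat) dvd 2 ^ k"
    using prime_dvd_power[of "3::nat" 2 k] by auto
  moreover have "(2::nat) ^ k mod 3 < 3" by simp
  ultimately have "(2::nat) ^ k mod 3 = 1 \<or> (2::nat) ^ k mod 3 = 2"
    unfolding dvd_eq_mod_eq_0 by linarith
  then show ?thesis
  proof
    assume "(2::nat) ^ k mod 3 = 2"
    then have "r * r = 1" using r_mod by (simp add: power2_eq_square)
    then show ?thesis using r3 by (simp add: power3_eq_cube)
  qed (use r_mod in simp)
qed

lemma card_image_funpow_stabilizes: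
  fixes f :: "'a \<Rightarrow> 'a"
  assumes "finite E"
  shows "\<exists>k. card ((f ^^ Suc k) ` E) = card ((f ^^ k) ` E)"
proof (rule ccontr)
  assume "\<nexists>k. card ((f ^^ Suc k) ` E) = card ((f ^^ k) ` E)"
  moreover have "card ((f ^^ Suc k) ` E) \<le> card ((f ^^ k) ` E)" for k
    using card_image_le[of "(f ^^ k) ` E" f] assms by (simp add: image_image)
  ultimately have shrinks: "card ((f ^^ Suc k) ` E) < card ((f ^^ k) ` E)" for k
    by (meson le_neq_implies_less)
  have "card ((f ^^ k) ` E) + k \<le> card E" for k
  proof (induction k)
    case (Suc k)
    then show ?case using shrinks[of k] by linarith
  qed simp
  from this[of "Suc (card E)"] show False by simp
qed

lemma funpow_square: "((\<lambda>x. x ^ 2) ^^ k) (x :: 'a :: monoid_mult) = x ^ (2 ^ k)"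
  by (induction k) (simp_all add: power_mult[symmetric] ac_simps)

text \<open>After finitely many squarings, squaring becomes injective on the image \<open>E\<^sub>k\<close> of \<open>E\<close>,
  hence so does cubing; then \<open>x\<^sup>3 = y\<^sup>3\<close> forces \<open>x / y\<close> to be a root of unity of order
  dividing both \<open>3\<close> and a power of \<open>2\<close>.\<close>

lemma inj_on_cube_if_image_square_eq:
  fixes E :: "'a :: field set"
  assumes fin: "finite E" and eq: "(\<lambda>x. x ^ 2) ` E = (\<lambda>x. x ^ 3) ` E"
  shows "inj_on (\<lambda>x. x ^ 3) E"
proof -
  let ?sq = "\<lambda>x::'a. x ^ 2"
  obtain k where k: "card ((?sq ^^ Suc k) ` E) = card ((?sq ^^ k) ` E)"
    using card_image_funpow_stabilizes[OF fin] by blast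
  let ?Ek = "(\<lambda>x. x ^ (2 ^ k)) ` E"
  have cube_Ek: "(\<lambda>x. x ^ 3) ` ?Ek = (?sq ^^ Suc k) ` E"
  proof -
    have "(\<lambda>x. x ^ 3) ` ?Ek = (\<lambda>x. x ^ (2 ^ k)) ` ((\<lambda>x. x ^ 3) ` E)"
      unfolding image_image by (simp add: power_mult[symmetric] mult.commute)
    also have "\<dots> = (\<lambda>x. x ^ (2 ^ k)) ` (?sq ` E)" using eq by simp
    finally show ?thesis
      unfolding funpow_square image_image by (simp add: power_mult[symmetric] mult.commute)
  qed
  have inj_Ek: "inj_on (\<lambda>x. x ^ 3) ?Ek"
    using k fin by (intro eq_card_imp_inj_on) (auto simp: cube_Ek funpow_square)
  show ?thesis
  proof (rule inj_onI)
    fix x y assume x: "x \<in> E" and y: "y \<in> E" and xy: "x ^ 3 = y ^ 3"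
    have "(x ^ (2 ^ k)) ^ 3 = (y ^ (2 ^ k)) ^ 3"
      using xy by (metis power_mult mult.commute)
    then have xyk: "x ^ (2 ^ k) = y ^ (2 ^ k)"
      using inj_Ek x y by (auto dest: inj_onD)
    show "x = y"
    proof (cases "y = 0")
      case False
      have "(x / y) ^ 3 = 1" "(x / y) ^ (2 ^ k) = 1"
        using xy xyk False by (simp_all add: power_divide)
      then show ?thesis using False two_power_cube_root_of_unity_eq_1 by force
    qed (use xy in simp)
  qed
qed

section \<open>Conjugate transpose and unitary matrices\<close>

lemma cadj_dims [simp]: "dim_row (cadj A) = dim_col A" "dim_col (cadj A) = dim_row A"
  unfolding cadj_def by auto

lemma cadj_carrier [simp]: "A \<in> carrier_mat n m \<Longrightarrow> cadj A \<in> carrier_mat m n"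
  unfolding cadj_def by auto

lemma cadj_index [simp]:
  "i < dim_col A \<Longrightarrow> j < dim_row A \<Longrightarrow> cadj A $$ (i, j) = cnj (A $$ (j, i))"
  unfolding cadj_def by auto

lemma cadj_cadj [simp]: "cadj (cadj A) = A"
  by (intro eq_matI) auto

lemma cadj_one [simp]: "cadj (1\<^sub>m n) = 1\<^sub>m n"
  by (intro eq_matI) auto

lemma cadj_minus:
  "dim_row X = dim_row Y \<Longrightarrow> dim_col X = dim_col Y \<Longrightarrow> cadj (X - Y) = cadj X - cadj Y"
  by (intro eq_matI) auto

lemma index_mult_mat_sum:
  assumes "A \<in> carrier_mat n m" "B \<in> carrier_mat m l" "i < n" "j < l"
  shows "(A * B) $$ (i, j) = (\<Sum>k<m. A $$ (i, k) * B $$ (k, j))"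
  using assms by (auto simp: scalar_prod_def lessThan_atLeast0 intro!: sum.cong)

lemma index_mult_mat_vec_sum:
  assumes "A \<in> carrier_mat n m" "x \<in> carrier_vec m" "i < n"
  shows "(A *\<^sub>v x) $ i = (\<Sum>k<m. A $$ (i, k) * x $ k)"
  using assms by (auto simp: scalar_prod_def lessThan_atLeast0 intro!: sum.cong)

lemma cadj_mult:
  assumes A: "A \<in> carrier_mat n m" and B: "B \<in> carrier_mat m l"
  shows "cadj (A * B) = cadj B * cadj A"
proof (rule eq_matI)
  fix i j assume "i < dim_row (cadj B * cadj A)" "j < dim_col (cadj B * cadj A)"
  then have i: "i < l" and j: "j < n" using A B by auto
  have "cadj (A * B) $$ (i, j) = cnj (\<Sum>k<m. A $$ (j, k) * B $$ (k, i))"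
    using A B i j by (simp add: index_mult_mat_sum[OF A B j i])
  also have "\<dots> = (\<Sum>k<m. cadj B $$ (i, k) * cadj A $$ (k, j))"
    using A B i j by (simp add: mult.commute)
  also have "\<dots> = (cadj B * cadj A) $$ (i, j)"
    using A B i j by (subst index_mult_mat_sum[of _ l m _ n]) auto
  finally show "cadj (A * B) $$ (i, j) = (cadj B * cadj A) $$ (i, j)" .
qed (use A B in auto)

lemma assoc_mult_mat_dims:
  assumes "dim_col A = dim_row B" "dim_col B = dim_row C"
  shows "A * B * C = A * (B * C)"
proof -
  have a: "A \<in> carrier_mat (dim_row A) (dim_row B)" using assms(1) unfolding carrier_mat_def by simp
  have b: "B \<in> carrier_mat (dim_row B) (dim_row C)" using assms(2) unfolding carrier_mat_def by simp
  have c: "C \<in> carrier_mat (dim_row C) (dim_col C)" unfolding carrier_mat_def by simp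
  show ?thesis using assoc_mult_mat[OF a b c] .
qed

lemma index_mat_diag [simp]:
  "i < n \<Longrightarrow> j < n \<Longrightarrow> mat_diag n d $$ (i, j) = (if i = j then d i else 0)"
  unfolding mat_diag_def by simp

lemma mat_diag_dims [simp]: "dim_row (mat_diag n d) = n" "dim_col (mat_diag n d) = n"
  unfolding mat_diag_def by simp_all

lemma mat_diag_pow: "mat_diag n d ^\<^sub>m k = mat_diag n (\<lambda>i. d i ^ k)"
proof (induction k)
  case 0
  show ?case using mat_diag_one[of n] by simp
next
  case (Suc k)
  then show ?case by (simp add: power_commutes)
qed

lemma index_mat_diag_mult:
  "X \<in> carrier_mat n m \<Longrightarrow> i < n \<Longrightarrow> j < m \<Longrightarrow> (mat_diag n d * X) $$ (i, j) = d i * X $$ (i, j)"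
  by (simp add: mat_diag_mult_left)

lemma index_mult_mat_diag:
  "X \<in> carrier_mat m n \<Longrightarrow> i < m \<Longrightarrow> j < n \<Longrightarrow> (X * mat_diag n d) $$ (i, j) = X $$ (i, j) * d j"
  by (simp add: mat_diag_mult_right)

definition cinner :: "nat \<Rightarrow> complex vec \<Rightarrow> complex vec \<Rightarrow> complex" where
  "cinner n x y = (\<Sum>i<n. x $ i * cnj (y $ i))"

lemma cinner_self: "cinner n v v = of_real (\<Sum>i<n. (cmod (v $ i))\<^sup>2)"
proof -
  have "cinner n v v = (\<Sum>i<n. of_real ((cmod (v $ i))\<^sup>2))"
    unfolding cinner_def by (intro sum.cong refl) (metis complex_norm_square)
  then show ?thesis by simp
qed

lemma cinner_self_eq_0:
  assumes "w \<in> carrier_vec n" "cinner n w w = 0"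
  shows "w = 0\<^sub>v n"
proof -
  have "(\<Sum>i<n. (cmod (w $ i))\<^sup>2) = 0"
    using assms(2) unfolding cinner_self of_real_eq_0_iff .
  then have "\<forall>i<n. (cmod (w $ i))\<^sup>2 = 0" by (simp add: sum_nonneg_eq_0_iff)
  then show ?thesis using assms(1) by (intro eq_vecI) auto
qed

lemma cinner_smult_right: "cinner n v (e \<cdot>\<^sub>v w) = cnj e * cinner n v w"
  if "w \<in> carrier_vec n"
  unfolding cinner_def using that by (simp add: sum_distrib_left mult_ac)

lemma cinner_mult_mat_vec_left:
  assumes A: "A \<in> carrier_mat n n" and x: "x \<in> carrier_vec n" and y: "y \<in> carrier_vec n"
  shows "cinner n (A *\<^sub>v x) y = cinner n x (cadj A *\<^sub>v y)"
proof -
  have "cinner n (A *\<^sub>v x) y = (\<Sum>i<n. (\<Sum>k<n. A $$ (i, k) * x $ k) * cnj (y $ i))"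
    unfolding cinner_def by (intro sum.cong refl) (simp add: index_mult_mat_vec_sum[OF A x])
  also have "\<dots> = (\<Sum>i<n. \<Sum>k<n. A $$ (i, k) * x $ k * cnj (y $ i))"
    by (simp add: sum_distrib_right)
  also have "\<dots> = (\<Sum>k<n. x $ k * cnj (\<Sum>i<n. cnj (A $$ (i, k)) * y $ i))"
    by (subst sum.swap) (simp add: sum_distrib_left mult_ac)
  also have "\<dots> = cinner n x (cadj A *\<^sub>v y)"
  proof -
    have "(cadj A *\<^sub>v y) $ k = (\<Sum>i<n. cnj (A $$ (i, k)) * y $ i)" if "k < n" for k
      using A y that by (subst index_mult_mat_vec_sum[of _ n n]) auto
    then show ?thesis unfolding cinner_def by simp
  qed
  finally show ?thesis .
qed

lemma unitary_carrier: "unitary_mat n U \<Longrightarrow> U \<in> carrier_mat n n"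
  unfolding unitary_mat_def by simp

lemma unitary_cadj: "unitary_mat n U \<Longrightarrow> unitary_mat n (cadj U)"
  unfolding unitary_mat_def by auto

lemma unitary_one: "unitary_mat n (1\<^sub>m n)"
  unfolding unitary_mat_def by simp

lemma unitary_mult:
  assumes U: "unitary_mat n U" and V: "unitary_mat n V"
  shows "unitary_mat n (U * V)"
proof -
  from U V have c: "U \<in> carrier_mat n n" "V \<in> carrier_mat n n"
    and "U * cadj U = 1\<^sub>m n" "cadj U * U = 1\<^sub>m n" "V * cadj V = 1\<^sub>m n" "cadj V * V = 1\<^sub>m n"
    unfolding unitary_mat_def by auto
  moreover have "U * V * cadj (U * V) = U * (V * cadj V) * cadj U"
    "cadj (U * V) * (U * V) = cadj V * (cadj U * U) * V"
    using c by (simp_all add: cadj_mult assoc_mult_mat_dims)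
  ultimately show ?thesis unfolding unitary_mat_def by auto
qed

lemma unitary_cadj_mult_cancel:
  "unitary_mat n U \<Longrightarrow> dim_row X = n \<Longrightarrow> cadj U * (U * X) = X"
  unfolding unitary_mat_def by (auto simp: assoc_mult_mat_dims[symmetric])

lemma unitary_mult_cadj_cancel:
  "unitary_mat n U \<Longrightarrow> dim_row X = n \<Longrightarrow> U * (cadj U * X) = X"
  unfolding unitary_mat_def by (auto simp: assoc_mult_mat_dims[symmetric])

lemma unitary_mat_diag:
  assumes "\<And>i. i < n \<Longrightarrow> cmod (d i) = 1"
  shows "unitary_mat n (mat_diag n d)"
proof -
  have "d i * cnj (d i) = 1" if "i < n" for i
    using assms[OF that] complex_norm_square[of "d i"] by simp
  then have "mat_diag n (\<lambda>i. d i * cnj (d i)) = 1\<^sub>m n" "mat_diag n (\<lambda>i. cnj (d i) * d i) = 1\<^sub>m n"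
    by (auto intro!: eq_matI simp: mult.commute)
  moreover have "cadj (mat_diag n d) = mat_diag n (\<lambda>i. cnj (d i))"
    by (intro eq_matI) auto
  ultimately show ?thesis unfolding unitary_mat_def by simp
qed

lemma cinner_unitary:
  assumes U: "unitary_mat n U" and v: "v \<in> carrier_vec n" and w: "w \<in> carrier_vec n"
  shows "cinner n (U *\<^sub>v v) (U *\<^sub>v w) = cinner n v w"
proof -
  have Uc: "U \<in> carrier_mat n n" using U by (rule unitary_carrier)
  have "cadj U *\<^sub>v (U *\<^sub>v w) = (cadj U * U) *\<^sub>v w"
    using Uc w by (intro assoc_mult_mat_vec[symmetric, of _ n n _ n]) auto
  also have "\<dots> = w" using U w unfolding unitary_mat_def by simp
  finally show ?thesis using Uc v w by (simp add: cinner_mult_mat_vec_left)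
qed

lemma unitary_eigenvector_cadj:
  assumes U: "unitary_mat n U" and w: "w \<in> carrier_vec n" and Uw: "U *\<^sub>v w = e \<cdot>\<^sub>v w"
  shows "cadj U *\<^sub>v w = cnj e \<cdot>\<^sub>v w"
proof (cases "w = 0\<^sub>v n")
  case False
  have Uc: "U \<in> carrier_mat n n" using U by (rule unitary_carrier)
  have "cinner n w w = cinner n (e \<cdot>\<^sub>v w) (e \<cdot>\<^sub>v w)"
    using cinner_unitary[OF U w w] Uw by simp
  also have "\<dots> = e * cnj e * cinner n w w"
    unfolding cinner_def using w by (simp add: sum_distrib_left mult_ac)
  moreover have "cinner n w w \<noteq> 0" using cinner_self_eq_0[OF w] False by blast
  ultimately have "cnj e * e = 1" by (simp add: mult.commute)
  have "w = cadj U *\<^sub>v (U *\<^sub>v w)"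
    using U Uc w unfolding unitary_mat_def by (simp add: assoc_mult_mat_vec[symmetric, of _ n n _ n])
  also have "\<dots> = e \<cdot>\<^sub>v (cadj U *\<^sub>v w)"
    unfolding Uw using Uc w by (simp add: mult_mat_vec[of _ n n])
  finally have "cnj e \<cdot>\<^sub>v w = (cnj e * e) \<cdot>\<^sub>v (cadj U *\<^sub>v w)"
    by (metis smult_smult_assoc)
  then show ?thesis using \<open>cnj e * e = 1\<close> by simp
qed (use unitary_carrier[OF U] in auto)

text \<open>A unitary matrix has no Jordan blocks of size \<open>2\<close>: if \<open>w = (U - e) v\<close> is an
  eigenvector, then \<open>\<langle>w, w\<rangle> = \<langle>v, (U - e)\<^sup>* w\<rangle> = 0\<close>.\<close>

lemma unitary_char_matrix_kernel_sq:
  assumes U: "unitary_mat n U" and v: "v \<in> carrier_vec n"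
    and h: "char_matrix U e *\<^sub>v (char_matrix U e *\<^sub>v v) = 0\<^sub>v n"
  shows "char_matrix U e *\<^sub>v v = 0\<^sub>v n"
proof -
  have Uc: "U \<in> carrier_mat n n" using U by (rule unitary_carrier)
  have char_apply: "char_matrix U e *\<^sub>v x = U *\<^sub>v x - e \<cdot>\<^sub>v x" if "x \<in> carrier_vec n" for x
  proof -
    have "char_matrix U e *\<^sub>v x = U *\<^sub>v x + ((- e) \<cdot>\<^sub>m 1\<^sub>m n) *\<^sub>v x"
      unfolding char_matrix_def using Uc that by (subst add_mult_distrib_mat_vec[of _ n n]) auto
    then show ?thesis using Uc that by (intro eq_vecI) auto
  qed
  define w where "w = char_matrix U e *\<^sub>v v"
  have w: "w \<in> carrier_vec n" unfolding w_def using char_matrix_closed[OF Uc, of e] v by (rule mult_mat_vec_carrier)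
  have diff: "U *\<^sub>v w - e \<cdot>\<^sub>v w = 0\<^sub>v n"
    using h char_apply[OF w] unfolding w_def[symmetric] by simp
  have "U *\<^sub>v w = e \<cdot>\<^sub>v w"
  proof (rule eq_vecI)
    fix i assume "i < dim_vec (e \<cdot>\<^sub>v w)"
    then have i: "i < n" using w by simp
    have "(U *\<^sub>v w - e \<cdot>\<^sub>v w) $ i = 0" using diff i by simp
    then show "(U *\<^sub>v w) $ i = (e \<cdot>\<^sub>v w) $ i" using Uc w i by simp
  qed (use Uc w in simp)
  then have adj: "cadj U *\<^sub>v w = cnj e \<cdot>\<^sub>v w" by (rule unitary_eigenvector_cadj[OF U w])
  have wi: "w $ i = (U *\<^sub>v v) $ i - e * v $ i" if "i < n" for i
    using char_apply[OF v] Uc v that unfolding w_def by simp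
  have "cinner n w w = (\<Sum>i<n. (U *\<^sub>v v) $ i * cnj (w $ i) - e * (v $ i * cnj (w $ i)))"
    unfolding cinner_def by (intro sum.cong refl) (simp add: wi algebra_simps)
  also have "\<dots> = cinner n (U *\<^sub>v v) w - e * cinner n v w"
    unfolding cinner_def by (simp add: sum_subtractf sum_distrib_left)
  also have "cinner n (U *\<^sub>v v) w = e * cinner n v w"
    using cinner_mult_mat_vec_left[OF Uc v w] adj cinner_smult_right[OF w] by simp
  finally have "cinner n w w = 0" by simp
  then show ?thesis using cinner_self_eq_0[OF w] unfolding w_def by blast
qed

lemma pow_mat_2_3:
  assumes "A \<in> carrier_mat n n"
  shows "A ^\<^sub>m 2 = A * A" "A ^\<^sub>m 3 = A * A * A"
  using assms by (simp_all add: numeral_2_eq_2 numeral_3_eq_3)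

section \<open>Diagonalization of unitary matrices\<close>

lemma unitary_dim_gen_eigenspace_2:
  assumes U: "unitary_mat n U"
  shows "dim_gen_eigenspace U e 2 = dim_gen_eigenspace U e 1"
proof -
  let ?M = "char_matrix U e"
  have M: "?M \<in> carrier_mat n n" using unitary_carrier[OF U] by simp
  have "mat_kernel (?M * ?M) = mat_kernel ?M"
  proof
    show "mat_kernel ?M \<subseteq> mat_kernel (?M * ?M)" using mat_kernel_mult_subset[OF M M] .
    show "mat_kernel (?M * ?M) \<subseteq> mat_kernel ?M"
    proof
      fix v assume v: "v \<in> mat_kernel (?M * ?M)"
      have MM: "?M * ?M \<in> carrier_mat n n" using M by simp
      from mat_kernelD[OF MM v] have vc: "v \<in> carrier_vec n" and "?M * ?M *\<^sub>v v = 0\<^sub>v n"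
        by auto
      then have "?M *\<^sub>v (?M *\<^sub>v v) = 0\<^sub>v n" using M by simp
      from unitary_char_matrix_kernel_sq[OF U vc this] show "v \<in> mat_kernel ?M"
        using M vc by (intro mat_kernelI) auto
    qed
  qed
  moreover have "?M ^\<^sub>m 2 = ?M * ?M" "?M ^\<^sub>m 1 = ?M"
    using M by (simp_all add: numeral_2_eq_2)
  ultimately show ?thesis
    unfolding dim_gen_eigenspace_def kernel_dim_def using M by simp
qed

lemma sum_list_mono_eq_imp_eq:
  fixes f g :: "'a \<Rightarrow> nat"
  assumes "\<forall>x\<in>set xs. f x \<le> g x" "sum_list (map f xs) = sum_list (map g xs)"
  shows "\<forall>x\<in>set xs. f x = g x"
  using assms
proof (induction xs)
  case (Cons a xs)
  have "sum_list (map f xs) \<le> sum_list (map g xs)"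
    using Cons.prems(1) by (intro sum_list_mono) auto
  then show ?case using Cons by auto
qed simp

lemma unitary_jordan_blocks_size_one:
  assumes U: "unitary_mat n U" and jnf: "jordan_nf U n_as"
  shows "\<forall>(k, e)\<in>set n_as. k = 1"
proof -
  have "\<forall>x\<in>set (map fst [(k, e')\<leftarrow>n_as . e' = e]). min 1 x = min 2 x" for e
    using unitary_dim_gen_eigenspace_2[OF U, of e] unfolding dim_gen_eigenspace[OF jnf]
    by (intro sum_list_mono_eq_imp_eq) auto
  then have "k \<le> 1" if "(k, e) \<in> set n_as" for k e
    using that by fastforce
  moreover have "k \<noteq> 0" if "(k, e) \<in> set n_as" for k e
    using jnf that unfolding jordan_nf_def by force
  ultimately show ?thesis by fastforce
qed

lemma jordan_matrix_blocks_size_one: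
  assumes "\<forall>(k, e)\<in>set n_as. k = 1"
  shows "jordan_matrix n_as = mat_diag (length n_as) (\<lambda>i. snd (n_as ! i))"
  using assms
proof (induction n_as)
  case Nil
  then show ?case unfolding jordan_matrix_def by (intro eq_matI) auto
next
  case (Cons ke n_as)
  obtain k e where ke: "ke = (k, e)" by force
  with Cons have k: "k = 1" by auto
  have s: "sum_list (map fst n_as) = length n_as"
    using Cons.prems by (induction n_as) auto
  have IH: "jordan_matrix n_as = mat_diag (length n_as) (\<lambda>i. snd (n_as ! i))"
    using Cons by auto
  show ?case unfolding ke k jordan_matrix_Cons s IH
    by (intro eq_matI) (auto simp: nth_Cons')
qed

lemma unitary_diagonalizable:
  assumes U: "unitary_mat n U"
  shows "\<exists>P Q d. similar_mat_wit U (mat_diag n d) P Q"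
proof -
  have Uc: "U \<in> carrier_mat n n" using U by (rule unitary_carrier)
  obtain as where "char_poly U = (\<Prod>a\<leftarrow>as. [:- a, 1:])"
    using char_poly_factorized[OF Uc] by blast
  from jordan_nf_exists[OF Uc this] obtain n_as where jnf: "jordan_nf U n_as" by blast
  have diag: "jordan_matrix n_as = mat_diag (length n_as) (\<lambda>i. snd (n_as ! i))"
    using jordan_matrix_blocks_size_one unitary_jordan_blocks_size_one[OF U jnf] by blast
  from jnf obtain P Q where wit: "similar_mat_wit U (jordan_matrix n_as) P Q"
    unfolding jordan_nf_def similar_mat_def by blast
  have "length n_as = n"
    using similar_mat_witD2(5)[OF Uc wit] unfolding diag by auto
  then show ?thesis using wit diag by metis
qed

lemma similar_mat_diag_image_eq:
  fixes d e :: "nat \<Rightarrow> 'a :: idom"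
  assumes "similar_mat (mat_diag n d) (mat_diag n e)"
  shows "d ` {..<n} = e ` {..<n}"
proof -
  have char_poly_diag: "char_poly (mat_diag n f) = (\<Prod>a\<leftarrow>map f [0..<n]. [:- a, 1:])"
    for f :: "nat \<Rightarrow> 'a"
  proof -
    have "upper_triangular (mat_diag n f)"
      unfolding upper_triangular_def by simp
    moreover have "diag_mat (mat_diag n f) = map f [0..<n]"
      unfolding diag_mat_def by (simp add: map_eq_conv)
    ultimately show ?thesis using char_poly_upper_triangular[of "mat_diag n f" n] by simp
  qed
  have roots: "poly (\<Prod>a\<leftarrow>xs. [:- a, 1:]) x = 0 \<longleftrightarrow> x \<in> set xs" for xs and x :: 'a
    by (induction xs) auto
  have "x \<in> set (map d [0..<n]) \<longleftrightarrow> x \<in> set (map e [0..<n])" for x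
    using arg_cong[OF char_poly_similar[OF assms], of "\<lambda>p. poly p x = 0"]
    unfolding char_poly_diag roots .
  then show ?thesis by (auto simp: lessThan_atLeast0)
qed

lemma mat_diag_commute_if_inj_on:
  fixes d :: "nat \<Rightarrow> 'a :: idom"
  assumes X: "X \<in> carrier_mat n n"
    and comm: "mat_diag n (\<lambda>i. f (d i)) * X = X * mat_diag n (\<lambda>i. f (d i))"
    and inj: "inj_on f (d ` {..<n})"
  shows "mat_diag n d * X = X * mat_diag n d"
proof (rule eq_matI)
  fix i j assume "i < dim_row (X * mat_diag n d)" "j < dim_col (X * mat_diag n d)"
  then have i: "i < n" and j: "j < n" using X by auto
  have "(mat_diag n (\<lambda>i. f (d i)) * X) $$ (i, j) = (X * mat_diag n (\<lambda>i. f (d i))) $$ (i, j)"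
    using comm by (rule arg_cong)
  then have "f (d i) * X $$ (i, j) = X $$ (i, j) * f (d j)"
    unfolding index_mat_diag_mult[OF X i j] index_mult_mat_diag[OF X i j] .
  then have "X $$ (i, j) * (f (d i) - f (d j)) = 0"
    by (simp add: algebra_simps)
  then have "X $$ (i, j) = 0 \<or> d i = d j"
    using inj i j by (auto dest: inj_onD)
  then show "(mat_diag n d * X) $$ (i, j) = (X * mat_diag n d) $$ (i, j)"
    unfolding index_mat_diag_mult[OF X i j] index_mult_mat_diag[OF X i j] by auto
qed (use X in auto)

lemma similar_mat_wit_commute:
  fixes P :: "'a :: semiring_1 mat"
  assumes P: "P \<in> carrier_mat n n" and Q: "Q \<in> carrier_mat n n"
    and X: "X \<in> carrier_mat n n" and Y: "Y \<in> carrier_mat n n"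
    and QP: "Q * P = 1\<^sub>m n" and XY: "X * Y = Y * X"
  shows "(P * X * Q) * (P * Y * Q) = (P * Y * Q) * (P * X * Q)"
proof -
  have conj_mult: "(P * A * Q) * (P * B * Q) = P * (A * B) * Q"
    if A: "A \<in> carrier_mat n n" and B: "B \<in> carrier_mat n n" for A B
  proof -
    have "(P * A * Q) * (P * B * Q) = P * A * (Q * P) * B * Q"
      using P Q A B by (simp add: assoc_mult_mat_dims)
    also have "\<dots> = P * (A * B) * Q"
      unfolding QP using P Q A B by (simp add: assoc_mult_mat_dims left_mult_one_mat[of "B * Q" n n])
    finally show ?thesis .
  qed
  show ?thesis using conj_mult[OF X Y] conj_mult[OF Y X] XY by simp
qed

section \<open>Unitary solutions of the Baumslag--Solitar relation\<close>

lemma conj_mult_cancel: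
  fixes P :: "'a :: semiring_1 mat"
  assumes P: "P \<in> carrier_mat n n" and Q: "Q \<in> carrier_mat n n"
    and M: "M \<in> carrier_mat n n" and QP: "Q * P = 1\<^sub>m n"
  shows "Q * (P * M * Q) * P = M"
proof -
  have "Q * (P * M * Q) * P = (Q * P) * M * (Q * P)"
    using P Q M by (simp add: assoc_mult_mat_dims)
  then show ?thesis using M by (simp add: QP)
qed

lemma inj_on_cube_diag_if_similar_pow:
  fixes A :: "'a :: field mat"
  assumes wit: "similar_mat_wit A (mat_diag n d) P Q"
    and sim: "similar_mat (A ^\<^sub>m 3) (A ^\<^sub>m 2)"
  shows "inj_on (\<lambda>x. x ^ 3) (d ` {..<n})"
proof -
  have "similar_mat (A ^\<^sub>m k) (mat_diag n (\<lambda>i. d i ^ k))" for k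
    using similar_mat_wit_pow[OF wit] unfolding similar_mat_def mat_diag_pow by blast
  then have "similar_mat (mat_diag n (\<lambda>i. d i ^ 2)) (mat_diag n (\<lambda>i. d i ^ 3))"
    using sim by (meson similar_mat_sym similar_mat_trans)
  then show ?thesis
    using similar_mat_diag_image_eq
    by (intro inj_on_cube_if_image_square_eq) (simp_all add: image_image)
qed

lemma unitary_conj_square:
  assumes UB: "unitary_mat n B" and A: "A \<in> carrier_mat n n"
  shows "(cadj B * A * B) * (cadj B * A * B) = cadj B * A ^\<^sub>m 2 * B"
proof -
  have B: "B \<in> carrier_mat n n" using UB by (rule unitary_carrier)
  have "(cadj B * A * B) * (cadj B * A * B) = cadj B * A * (B * cadj B) * A * B"
    using A B by (simp add: assoc_mult_mat_dims)
  also have "\<dots> = cadj B * A * A * B"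
  proof -
    have "B * cadj B = 1\<^sub>m n" using UB unfolding unitary_mat_def by simp
    moreover have "cadj B * A \<in> carrier_mat n n" using A B by (meson cadj_carrier mult_carrier_mat)
    ultimately show ?thesis using right_mult_one_mat by metis
  qed
  also have "\<dots> = cadj B * A ^\<^sub>m 2 * B"
    using A B by (simp add: pow_mat_2_3 assoc_mult_mat_dims)
  finally show ?thesis .
qed

text \<open>In an eigenbasis of \<open>A\<close> the relation says that the spectra of \<open>A\<^sup>2\<close> and \<open>A\<^sup>3\<close> coincide,
  so cubing is injective on the spectrum of \<open>A\<close>; hence everything commuting with
  \<open>A\<^sup>3 = (B\<^sup>* A B)\<^sup>2\<close>, in particular \<open>B\<^sup>* A B\<close>, commutes with \<open>A\<close>.\<close>

lemma unitary_bs23_relation_commute: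
  assumes UA: "unitary_mat n A" and UB: "unitary_mat n B"
    and rel: "cadj B * A ^\<^sub>m 2 * B = A ^\<^sub>m 3"
  shows "A * (cadj B * A * B) = (cadj B * A * B) * A"
proof -
  have Ac: "A \<in> carrier_mat n n" and Bc: "B \<in> carrier_mat n n"
    using UA UB by (simp_all add: unitary_carrier)
  obtain P Q d where wit: "similar_mat_wit A (mat_diag n d) P Q"
    using unitary_diagonalizable[OF UA] by blast
  have P: "P \<in> carrier_mat n n" and Q: "Q \<in> carrier_mat n n"
    and PQ: "P * Q = 1\<^sub>m n" and QP: "Q * P = 1\<^sub>m n" and A: "A = P * mat_diag n d * Q"
    using similar_mat_witD2[OF Ac wit] by blast+
  have "similar_mat (A ^\<^sub>m 3) (A ^\<^sub>m 2)"
    using UB Ac Bc rel by (intro similar_matI[where P = "cadj B" and Q = B and n = n])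
      (auto simp: unitary_mat_def)
  then have inj: "inj_on (\<lambda>x. x ^ 3) (d ` {..<n})"
    by (rule inj_on_cube_diag_if_similar_pow[OF wit])
  define C where "C = cadj B * A * B"
  have Cc: "C \<in> carrier_mat n n" unfolding C_def using Ac Bc by (meson cadj_carrier mult_carrier_mat)
  have "C * C = A ^\<^sub>m 3" unfolding C_def rel[symmetric] by (rule unitary_conj_square[OF UB Ac])
  then have "C * A ^\<^sub>m 3 = A ^\<^sub>m 3 * C"
    using assoc_mult_mat[OF Cc Cc Cc] by simp
  moreover have "Q * A ^\<^sub>m 3 * P = mat_diag n (\<lambda>i. d i ^ 3)"
    using similar_mat_wit_pow_id[OF wit] conj_mult_cancel[OF P Q mat_diag_dim QP]
    by (simp add: mat_diag_pow)
  ultimately have "(Q * C * P) * mat_diag n (\<lambda>i. d i ^ 3) = mat_diag n (\<lambda>i. d i ^ 3) * (Q * C * P)"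
    using similar_mat_wit_commute[OF Q P Cc _ PQ, of "A ^\<^sub>m 3"] Ac by simp
  moreover have QCP: "Q * C * P \<in> carrier_mat n n" using P Q Cc by (meson mult_carrier_mat)
  ultimately have "mat_diag n d * (Q * C * P) = (Q * C * P) * mat_diag n d"
    using mat_diag_commute_if_inj_on[where f = "\<lambda>x. x ^ 3", OF QCP _ inj] by simp
  then have "(P * mat_diag n d * Q) * (P * (Q * C * P) * Q) = (P * (Q * C * P) * Q) * (P * mat_diag n d * Q)"
    by (rule similar_mat_wit_commute[OF P Q mat_diag_dim QCP QP])
  then have "A * C = C * A"
    unfolding conj_mult_cancel[OF Q P Cc PQ] A[symmetric] .
  then show ?thesis unfolding C_def .
qed

section \<open>The Frobenius norm\<close>

lemma frob_norm_L2_set: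
  "frob_norm T = L2_set (\<lambda>p. cmod (T $$ p)) ({..<dim_row T} \<times> {..<dim_col T})"
  unfolding frob_norm_def L2_set_def by (simp add: sum.cartesian_product)

lemma frob_norm_nonneg: "0 \<le> frob_norm T"
  unfolding frob_norm_L2_set by simp

lemma frob_norm_sq: "(frob_norm T)\<^sup>2 = (\<Sum>i<dim_row T. \<Sum>j<dim_col T. (cmod (T $$ (i, j)))\<^sup>2)"
  unfolding frob_norm_def by (simp add: sum_nonneg)

lemma norm_index_le_frob_norm:
  "i < dim_row T \<Longrightarrow> j < dim_col T \<Longrightarrow> cmod (T $$ (i, j)) \<le> frob_norm T"
  unfolding frob_norm_L2_set by (rule member_le_L2_set) auto

lemma frob_norm_add_le:
  assumes "dim_row X = dim_row Y" "dim_col X = dim_col Y"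
  shows "frob_norm (X + Y) \<le> frob_norm X + frob_norm Y"
proof -
  let ?I = "{..<dim_row Y} \<times> {..<dim_col Y}"
  have "frob_norm (X + Y) = L2_set (\<lambda>p. cmod ((X + Y) $$ p)) ?I"
    unfolding frob_norm_L2_set by simp
  also have "\<dots> \<le> L2_set (\<lambda>p. cmod (X $$ p) + cmod (Y $$ p)) ?I"
    by (rule L2_set_mono) (auto simp: assms norm_triangle_ineq)
  also have "\<dots> \<le> frob_norm X + frob_norm Y"
    unfolding frob_norm_L2_set assms by (rule L2_set_triangle_ineq)
  finally show ?thesis .
qed

lemma frob_norm_uminus [simp]: "frob_norm (- X) = frob_norm X"
  unfolding frob_norm_def by simp

lemma frob_norm_diff_le:
  assumes "dim_row X = dim_row Y" "dim_col X = dim_col Y"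
  shows "frob_norm (X - Y) \<le> frob_norm X + frob_norm Y"
proof -
  have "X - Y = X + (- Y)" using assms by (intro eq_matI) auto
  then show ?thesis using frob_norm_add_le[of X "- Y"] assms by simp
qed

lemma frob_norm_cadj [simp]: "frob_norm (cadj A) = frob_norm A"
proof -
  have "(\<Sum>i<dim_col A. \<Sum>j<dim_row A. (cmod (cadj A $$ (i, j)))\<^sup>2)
      = (\<Sum>j<dim_row A. \<Sum>i<dim_col A. (cmod (A $$ (j, i)))\<^sup>2)"
    by (subst sum.swap) simp
  then show ?thesis unfolding frob_norm_def by simp
qed

lemma frob_norm_unitary_mult:
  assumes U: "unitary_mat n U" and X: "X \<in> carrier_mat n m"
  shows "frob_norm (U * X) = frob_norm X"
proof -
  have Uc: "U \<in> carrier_mat n n" using U by (rule unitary_carrier)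
  have col_norm: "(\<Sum>i<n. (cmod (M $$ (i, j)))\<^sup>2) = Re (cinner n (col M j) (col M j))"
    if "M \<in> carrier_mat n m" "j < m" for M j
    using that unfolding cinner_self by simp
  have cols: "(\<Sum>i<n. (cmod ((U * X) $$ (i, j)))\<^sup>2) = (\<Sum>i<n. (cmod (X $$ (i, j)))\<^sup>2)"
    if j: "j < m" for j
  proof -
    have Xj: "col X j \<in> carrier_vec n" by (rule col_carrier_vec[OF j X])
    have "cinner n (col (U * X) j) (col (U * X) j) = cinner n (col X j) (col X j)"
      unfolding col_mult2[OF Uc X j] by (rule cinner_unitary[OF U Xj Xj])
    moreover have "U * X \<in> carrier_mat n m" using Uc X by simp
    ultimately show ?thesis using col_norm[OF X j] col_norm[of "U * X", OF _ j] by simp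
  qed
  have "(frob_norm (U * X))\<^sup>2 = (\<Sum>i<n. \<Sum>j<m. (cmod ((U * X) $$ (i, j)))\<^sup>2)"
    unfolding frob_norm_sq using Uc X by simp
  also have "\<dots> = (\<Sum>j<m. \<Sum>i<n. (cmod ((U * X) $$ (i, j)))\<^sup>2)"
    by (rule sum.swap)
  also have "\<dots> = (\<Sum>j<m. \<Sum>i<n. (cmod (X $$ (i, j)))\<^sup>2)"
    using cols by simp
  also have "\<dots> = (\<Sum>i<n. \<Sum>j<m. (cmod (X $$ (i, j)))\<^sup>2)"
    by (rule sum.swap)
  also have "\<dots> = (frob_norm X)\<^sup>2"
    unfolding frob_norm_sq using X by simp
  finally show ?thesis by (rule power2_eq_imp_eq) (simp_all add: frob_norm_nonneg)
qed

lemma frob_norm_mult_unitary: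
  assumes U: "unitary_mat m U" and X: "X \<in> carrier_mat n m"
  shows "frob_norm (X * U) = frob_norm X"
proof -
  have "frob_norm (X * U) = frob_norm (cadj U * cadj X)"
    using X unitary_carrier[OF U] by (simp add: cadj_mult[symmetric])
  also have "\<dots> = frob_norm X"
    using frob_norm_unitary_mult[OF unitary_cadj[OF U] cadj_carrier[OF X]] by simp
  finally show ?thesis .
qed

lemma frob_norm_mult_diff_le:
  assumes X1: "unitary_mat n X1" and X2: "unitary_mat n X2"
    and Y1: "unitary_mat n Y1" and Y2: "unitary_mat n Y2"
  shows "frob_norm (X1 * X2 - Y1 * Y2) \<le> frob_norm (X1 - Y1) + frob_norm (X2 - Y2)"
proof -
  have c: "X1 \<in> carrier_mat n n" "X2 \<in> carrier_mat n n" "Y1 \<in> carrier_mat n n" "Y2 \<in> carrier_mat n n"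
    using X1 X2 Y1 Y2 unitary_carrier by auto
  have "X1 * X2 - Y1 * Y2 = (X1 - Y1) * X2 + Y1 * (X2 - Y2)"
    using c by (intro eq_matI)
      (auto simp: minus_mult_distrib_mat[of _ n n] mult_minus_distrib_mat[of _ n n])
  then have "frob_norm (X1 * X2 - Y1 * Y2) \<le> frob_norm ((X1 - Y1) * X2) + frob_norm (Y1 * (X2 - Y2))"
    using c by (simp add: frob_norm_add_le)
  also have "\<dots> = frob_norm (X1 - Y1) + frob_norm (X2 - Y2)"
    using frob_norm_mult_unitary[OF X2 minus_carrier_mat[OF c(3)]]
      frob_norm_unitary_mult[OF Y1 minus_carrier_mat[OF c(4)]] by simp
  finally show ?thesis .
qed

lemma word_eval_trivial: "word_eval k (\<lambda>_. 1\<^sub>m k) w = 1\<^sub>m k"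
  by (induction w) (auto simp: word_eval_def)

lemma is_hom_trivial: "is_hom k S R (\<lambda>_. 1\<^sub>m k)"
  unfolding is_hom_def by (simp add: unitary_one word_eval_trivial)

lemma homdist_ge:
  assumes "\<And>\<rho>. is_hom k S R \<rho> \<Longrightarrow> c \<le> Max (insert 0 ((\<lambda>s. frob_norm (\<phi> s - \<rho> s)) ` S))"
  shows "c \<le> homdist k S R \<phi>"
  unfolding homdist_def using assms is_hom_trivial[of k S R] by (intro cInf_greatest) auto

lemma defect_single: "defect k [r] \<phi> = frob_norm (word_eval k \<phi> r - 1\<^sub>m k)"
  unfolding defect_def using frob_norm_nonneg by (simp add: max_def)

lemma word_eval_bs23_rel:
  "word_eval k \<phi> bs23_rel = cadj (\<phi> Gb) * (\<phi> Ga * (\<phi> Ga * (\<phi> Gb *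
     (cadj (\<phi> Ga) * (cadj (\<phi> Ga) * (cadj (\<phi> Ga) * 1\<^sub>m k))))))"
  unfolding word_eval_def bs23_rel_def by simp

text \<open>The relator \<open>b\<^sup>-\<^sup>1 a\<^sup>2 b a\<^sup>-\<^sup>3\<close> differs from \<open>1\<close> by \<open>B\<^sup>* (A\<^sup>2 B - B A\<^sup>3) A\<^sup>-\<^sup>3\<close>.\<close>

lemma defect_bs23_rel:
  assumes UA: "unitary_mat n (\<phi> Ga)" and UB: "unitary_mat n (\<phi> Gb)"
  shows "defect n [bs23_rel] \<phi> = frob_norm (\<phi> Ga * \<phi> Ga * \<phi> Gb - \<phi> Gb * (\<phi> Ga * \<phi> Ga * \<phi> Ga))"
proof -
  let ?A = "\<phi> Ga" and ?B = "\<phi> Gb"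
  have A: "?A \<in> carrier_mat n n" and B: "?B \<in> carrier_mat n n"
    using UA UB by (simp_all add: unitary_carrier)
  define V where "V = cadj ?A * (cadj ?A * cadj ?A)"
  define M where "M = ?A * ?A * ?B - ?B * (?A * ?A * ?A)"
  have V: "unitary_mat n V" unfolding V_def using UA by (simp add: unitary_mult unitary_cadj)
  have Vc: "V \<in> carrier_mat n n" using V by (rule unitary_carrier)
  have M: "M \<in> carrier_mat n n" unfolding M_def using A B by (meson minus_carrier_mat mult_carrier_mat)
  have "cadj ?B * M * V
      = cadj ?B * (?A * ?A * ?B) * V - cadj ?B * (?B * (?A * ?A * ?A)) * V"
  proof -
    have X: "?A * ?A * ?B \<in> carrier_mat n n" and Y: "?B * (?A * ?A * ?A) \<in> carrier_mat n n"
      using A B by (meson mult_carrier_mat)+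
    have "cadj ?B \<in> carrier_mat n n" using B by simp
    note mult_minus_distrib_mat[OF this X Y]
      minus_mult_distrib_mat[OF mult_carrier_mat[OF this X] mult_carrier_mat[OF this Y] Vc]
    then show ?thesis unfolding M_def by simp
  qed
  also have "cadj ?B * (?B * (?A * ?A * ?A)) * V = 1\<^sub>m n"
    using UA UB A B unfolding V_def
    by (simp add: assoc_mult_mat_dims unitary_cadj_mult_cancel unitary_mult_cadj_cancel)
      (simp add: unitary_mat_def)
  also have "cadj ?B * (?A * ?A * ?B) * V = word_eval n \<phi> bs23_rel"
    unfolding word_eval_bs23_rel V_def using A B by (simp add: assoc_mult_mat_dims)
  finally have "word_eval n \<phi> bs23_rel - 1\<^sub>m n = cadj ?B * M * V" ..
  moreover have "frob_norm (cadj ?B * M * V) = frob_norm M"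
    using frob_norm_mult_unitary[OF V, of "cadj ?B * M" n] frob_norm_unitary_mult[OF unitary_cadj[OF UB] M]
      mult_carrier_mat[OF cadj_carrier[OF B] M] by simp
  ultimately show ?thesis unfolding defect_single M_def by simp
qed

lemma bs23_relation_of_is_hom:
  assumes "is_hom n {Ga, Gb} [bs23_rel] \<rho>"
  shows "cadj (\<rho> Gb) * \<rho> Ga ^\<^sub>m 2 * \<rho> Gb = \<rho> Ga ^\<^sub>m 3"
proof -
  let ?A = "\<rho> Ga" and ?B = "\<rho> Gb"
  have UA: "unitary_mat n ?A" and word: "word_eval n \<rho> bs23_rel = 1\<^sub>m n"
    using assms unfolding is_hom_def by auto
  have A: "?A \<in> carrier_mat n n" and B: "?B \<in> carrier_mat n n"
    using assms unfolding is_hom_def by (auto simp: unitary_carrier)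
  have "?A ^\<^sub>m 3 = word_eval n \<rho> bs23_rel * (?A * ?A * ?A)"
    using word A by (simp add: pow_mat_2_3)
  also have "\<dots> = cadj ?B * (?A * ?A) * ?B"
    unfolding word_eval_bs23_rel using UA A B
    by (simp add: assoc_mult_mat_dims unitary_cadj_mult_cancel unitary_mat_def)
  finally show ?thesis using A by (simp add: pow_mat_2_3)
qed

lemma frob_norm_commutator_conj_le:
  assumes UA: "unitary_mat n A" and UB: "unitary_mat n B"
    and UA': "unitary_mat n A'" and UB': "unitary_mat n B'"
    and comm: "A' * (cadj B' * A' * B') = (cadj B' * A' * B') * A'"
  shows "frob_norm (A * (cadj B * A * B) - (cadj B * A * B) * A)
    \<le> 4 * frob_norm (A - A') + 4 * frob_norm (B - B')"
proof -
  define C where "C = cadj B * A * B"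
  define C' where "C' = cadj B' * A' * B'"
  let ?a = "frob_norm (A - A')" and ?b = "frob_norm (B - B')"
  have UC: "unitary_mat n C" and UC': "unitary_mat n C'"
    unfolding C_def C'_def using UA UB UA' UB' by (simp_all add: unitary_mult unitary_cadj)
  have c: "A \<in> carrier_mat n n" "A' \<in> carrier_mat n n" "B \<in> carrier_mat n n" "B' \<in> carrier_mat n n"
    "C \<in> carrier_mat n n" "C' \<in> carrier_mat n n"
    using UA UA' UB UB' UC UC' by (simp_all add: unitary_carrier)
  have "frob_norm (cadj B - cadj B') = ?b"
    using c by (simp add: cadj_minus[symmetric])
  then have "frob_norm (cadj B * A - cadj B' * A') \<le> ?b + ?a"
    using frob_norm_mult_diff_le[OF unitary_cadj[OF UB] UA unitary_cadj[OF UB'] UA'] by simp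
  then have CC': "frob_norm (C - C') \<le> ?a + 2 * ?b"
    using frob_norm_mult_diff_le[of n "cadj B * A" B "cadj B' * A'" B'] UA UB UA' UB'
    unfolding C_def C'_def by (simp add: unitary_mult unitary_cadj)
  have "A * C - C * A = (A * C - A' * C') - (C * A - C' * A')"
    using c comm unfolding C'_def[symmetric] by (intro eq_matI) auto
  then have "frob_norm (A * C - C * A) \<le> frob_norm (A * C - A' * C') + frob_norm (C * A - C' * A')"
    using c by (simp add: frob_norm_diff_le)
  also have "\<dots> \<le> (?a + (?a + 2 * ?b)) + ((?a + 2 * ?b) + ?a)"
    using frob_norm_mult_diff_le[OF UA UC UA' UC'] frob_norm_mult_diff_le[OF UC UA UC' UA'] CC'
    by (simp add: add_mono)
  finally show ?thesis unfolding C_def by simp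
qed

lemma nonprincipal_ultrafilter_le_sequentially:
  assumes "nonprincipal_ultrafilter U"
  shows "U \<le> sequentially"
proof (rule filter_leI)
  fix P assume "eventually P sequentially"
  then obtain N where N: "\<And>n. n \<ge> N \<Longrightarrow> P n" unfolding eventually_sequentially by blast
  have "\<forall>m\<in>{..<N}. eventually (\<lambda>x. x \<noteq> m) U"
    using assms unfolding nonprincipal_ultrafilter_def by blast
  then have "eventually (\<lambda>x. \<forall>m\<in>{..<N}. x \<noteq> m) U"
    by (simp add: eventually_ball_finite)
  then show "eventually P U"
    by (rule eventually_mono) (use N not_le in blast)
qed

lemma not_frobenius_stable_if_far_from_homs:
  assumes U: "nonprincipal_ultrafilter U"
    and unitary: "\<And>n. ks n \<ge> 1 \<and> (\<forall>s\<in>S. unitary_mat (ks n) (\<phi>s n s))"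
    and defect: "(\<lambda>n. defect (ks n) R (\<phi>s n)) \<longlonglongrightarrow> 0"
    and far: "\<And>n. c \<le> homdist (ks n) S R (\<phi>s n)" and c: "c > 0"
  shows "\<not> frobenius_stable U S R"
proof
  assume "frobenius_stable U S R"
  moreover have "((\<lambda>n. defect (ks n) R (\<phi>s n)) \<longlongrightarrow> 0) U"
    using defect nonprincipal_ultrafilter_le_sequentially[OF U] by (rule tendsto_mono[rotated])
  ultimately have "((\<lambda>n. homdist (ks n) S R (\<phi>s n)) \<longlongrightarrow> 0) U"
    using unitary unfolding frobenius_stable_def by blast
  then have "eventually (\<lambda>n. homdist (ks n) S R (\<phi>s n) < c) U"
    using c by (rule order_tendstoD(2))
  then have "eventually (\<lambda>_. False) U"
    by (rule eventually_mono) (use far not_le in blast)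
  then show False using U unfolding nonprincipal_ultrafilter_def by (simp add: eventually_False)
qed

section \<open>Almost-representations of BS(2,3)\<close>

lemma sum_lessThan_single:
  fixes n :: nat
  assumes "a < n" "\<And>k. k < n \<Longrightarrow> k \<noteq> a \<Longrightarrow> f k = 0"
  shows "(\<Sum>k<n. f k) = f a"
  using assms by (subst sum.mono_neutral_right[of "{..<n}" "{a}"]) auto

lemma sum_lessThan_pair:
  fixes n :: nat
  assumes "a < n" "b < n" "a \<noteq> b" "\<And>k. k < n \<Longrightarrow> k \<noteq> a \<Longrightarrow> k \<noteq> b \<Longrightarrow> f k = 0"
  shows "(\<Sum>k<n. f k) = f a + f b"
  using assms by (subst sum.mono_neutral_right[of "{..<n}" "{a, b}"]) auto

lemma norm_cis_diff_le: "cmod (cis x - cis y) \<le> \<bar>x - y\<bar>"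
proof -
  define t where "t = x - y"
  have "(cmod (cis t - 1))\<^sup>2 = (cos t - 1)\<^sup>2 + (sin t)\<^sup>2"
    by (simp add: cmod_power2)
  also have "\<dots> = 2 - 2 * cos t"
    using sin_cos_squared_add[of t] by (simp add: power2_eq_square algebra_simps)
  also have "\<dots> = 4 * (sin (t / 2))\<^sup>2"
    using cos_double_sin[of "t / 2"] by simp
  also have "\<dots> \<le> 4 * (t / 2)\<^sup>2"
    using abs_sin_x_le_abs_x[of "t / 2"] abs_le_square_iff by fastforce
  also have "\<dots> = t\<^sup>2" by (simp add: power2_eq_square)
  finally have "cmod (cis t - 1) \<le> \<bar>t\<bar>"
    by (metis abs_le_square_iff abs_norm_cancel)
  moreover have "cis x - cis y = cis y * (cis t - 1)"
    unfolding t_def by (simp add: algebra_simps cis_mult)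
  ultimately show ?thesis unfolding t_def by (simp add: norm_mult)
qed

lemma norm_power2_diff_le:
  fixes x y :: "'a :: real_normed_field"
  assumes "norm x = 1" "norm y = 1"
  shows "norm (x ^ 2 - y ^ 2) \<le> 2 * norm (x - y)"
proof -
  have "norm (x ^ 2 - y ^ 2) = norm (x - y) * norm (x + y)"
    by (simp add: norm_mult[symmetric] power2_eq_square algebra_simps)
  also have "\<dots> \<le> norm (x - y) * 2"
    using norm_triangle_ineq[of x y] assms by (intro mult_left_mono) auto
  finally show ?thesis by simp
qed

lemma norm_power3_diff_le:
  fixes x y :: "'a :: real_normed_field"
  assumes "norm x = 1" "norm y = 1"
  shows "norm (x ^ 3 - y ^ 3) \<le> 3 * norm (x - y)"
proof -
  have "norm (x ^ 3 - y ^ 3) = norm (x - y) * norm (x * x + x * y + y * y)"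
    by (simp add: norm_mult[symmetric] power3_eq_cube algebra_simps)
  also have "norm (x * x + x * y + y * y) \<le> norm (x * x) + norm (x * y) + norm (y * y)"
    by (meson norm_triangle_ineq order_trans add_mono order_refl)
  then have "norm (x - y) * norm (x * x + x * y + y * y) \<le> norm (x - y) * 3"
    using assms by (intro mult_left_mono) (auto simp: norm_mult)
  finally show ?thesis by simp
qed

definition bs_dim :: "nat \<Rightarrow> nat" where
  "bs_dim m = 6 * m + 1"

definition bs_root :: "nat \<Rightarrow> complex" where
  "bs_root m = cis (2 * pi / real (bs_dim m))"

definition omega3 :: complex where
  "omega3 = cis (2 * pi / 3)"

text \<open>\<open>3 (3 m + 1)\<close> is \<open>3 / 2\<close> modulo \<open>6 m + 1\<close>, so squaring \<open>\<zeta>\<^bsup>bs_perm m j\<^esup>\<close> gives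
  \<open>(\<zeta>\<^sup>j)\<^sup>3\<close> for the root of unity \<open>\<zeta> = bs_root m\<close>.\<close>

definition bs_perm :: "nat \<Rightarrow> nat \<Rightarrow> nat" where
  "bs_perm m j = (3 * (3 * m + 1) * j) mod bs_dim m"

text \<open>After moving \<open>\<zeta>\<^bsup>2m\<^esup>\<close> to \<open>\<omega>\<close> and \<open>\<zeta>\<^bsup>3m\<^esup>\<close> to \<open>-1\<close>, both \<open>e\<^sub>0\<close> and \<open>e\<^bsub>3m\<^esub>\<close> are
  eigenvectors of \<open>A\<^sup>2\<close> for \<open>1\<close>, and both \<open>e\<^sub>0\<close> and \<open>e\<^bsub>2m\<^esub>\<close> are eigenvectors of \<open>A\<^sup>3\<close>
  for \<open>1\<close>; so \<open>B\<close> may map the latter pair to any orthonormal basis of the span of the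
  former.\<close>

definition bs_eigenvalue :: "nat \<Rightarrow> nat \<Rightarrow> complex" where
  "bs_eigenvalue m j = (if j = 2 * m then omega3 else if j = 3 * m then -1 else bs_root m ^ j)"

definition inv_sqrt2 :: complex where
  "inv_sqrt2 = of_real (1 / sqrt 2)"

definition bs_entry :: "nat \<Rightarrow> nat \<Rightarrow> nat \<Rightarrow> complex" where
  "bs_entry m i j =
     (if j = 0 then (if i = 0 \<or> i = 3 * m then inv_sqrt2 else 0)
      else if j = 2 * m then (if i = 0 then inv_sqrt2 else if i = 3 * m then - inv_sqrt2 else 0)
      else if i = bs_perm m j then 1 else 0)"

definition bs_A :: "nat \<Rightarrow> complex mat" where
  "bs_A m = mat_diag (bs_dim m) (bs_eigenvalue m)"

definition bs_B :: "nat \<Rightarrow> complex mat" where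
  "bs_B m = mat (bs_dim m) (bs_dim m) (\<lambda>(i, j). bs_entry m i j)"

lemma bs_dim_pos: "0 < bs_dim m"
  unfolding bs_dim_def by simp

lemma bs_perm_lt: "bs_perm m j < bs_dim m"
  unfolding bs_perm_def using bs_dim_pos by simp

lemma bs_perm_0: "bs_perm m 0 = 0"
  unfolding bs_perm_def by simp

lemma bs_perm_2m:
  assumes "m \<ge> 1"
  shows "bs_perm m (2 * m) = 3 * m"
proof -
  have "3 * (3 * m + 1) * (2 * m) = 3 * m + (3 * m) * bs_dim m"
    unfolding bs_dim_def by (simp add: algebra_simps)
  then have "bs_perm m (2 * m) = (3 * m) mod bs_dim m"
    unfolding bs_perm_def by simp
  also have "\<dots> = 3 * m" using assms unfolding bs_dim_def by simp
  finally show ?thesis .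
qed

lemma bs_perm_double: "(2 * bs_perm m j) mod bs_dim m = (3 * j) mod bs_dim m"
proof -
  have "(2 * bs_perm m j) mod bs_dim m = (2 * (3 * (3 * m + 1) * j)) mod bs_dim m"
    unfolding bs_perm_def by (rule mod_mult_right_eq)
  also have "2 * (3 * (3 * m + 1) * j) = 3 * j + (3 * j) * bs_dim m"
    unfolding bs_dim_def by (simp add: algebra_simps)
  finally show ?thesis by simp
qed

lemma bs_perm_inverse:
  assumes "j < bs_dim m"
  shows "((8 * m + 2) * bs_perm m j) mod bs_dim m = j"
proof -
  have "((8 * m + 2) * bs_perm m j) mod bs_dim m = ((8 * m + 2) * (3 * (3 * m + 1) * j)) mod bs_dim m"
    unfolding bs_perm_def by (rule mod_mult_right_eq)
  also have "(8 * m + 2) * (3 * (3 * m + 1) * j) = j + ((12 * m + 5) * j) * bs_dim m"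
    unfolding bs_dim_def by (simp add: algebra_simps)
  finally show ?thesis using assms by simp
qed

lemma inj_on_bs_perm: "inj_on (bs_perm m) {..<bs_dim m}"
  by (rule inj_on_inverseI[where g = "\<lambda>k. ((8 * m + 2) * k) mod bs_dim m"])
    (use bs_perm_inverse in blast)

lemma bij_betw_bs_perm: "bij_betw (bs_perm m) {..<bs_dim m} {..<bs_dim m}"
proof -
  have "bs_perm m ` {..<bs_dim m} \<subseteq> {..<bs_dim m}" using bs_perm_lt by auto
  then have "bs_perm m ` {..<bs_dim m} = {..<bs_dim m}"
    using card_image[OF inj_on_bs_perm] by (intro card_subset_eq) auto
  then show ?thesis using inj_on_bs_perm unfolding bij_betw_def by simp
qed

lemma bs_root_pow: "bs_root m ^ k = cis (real k * (2 * pi / real (bs_dim m)))"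
  unfolding bs_root_def by (simp add: DeMoivre)

lemma bs_root_pow_mod: "bs_root m ^ k = bs_root m ^ (k mod bs_dim m)"
proof -
  have "bs_root m ^ k = (bs_root m ^ bs_dim m) ^ (k div bs_dim m) * bs_root m ^ (k mod bs_dim m)"
    by (simp only: power_mult[symmetric] power_add[symmetric] mult_div_mod_eq)
  also have "bs_root m ^ bs_dim m = 1"
    unfolding bs_root_pow using bs_dim_pos[of m] by simp
  finally show ?thesis by simp
qed

lemma bs_root_pow_perm: "(bs_root m ^ bs_perm m j) ^ 2 = (bs_root m ^ j) ^ 3"
proof -
  have "(bs_root m ^ bs_perm m j) ^ 2 = bs_root m ^ ((2 * bs_perm m j) mod bs_dim m)"
    by (simp add: bs_root_pow_mod[symmetric] power_mult[symmetric] mult.commute)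
  also have "\<dots> = (bs_root m ^ j) ^ 3"
    by (simp add: bs_perm_double bs_root_pow_mod[symmetric] power_mult[symmetric] mult.commute)
  finally show ?thesis .
qed

lemma norm_bs_eigenvalue [simp]: "cmod (bs_eigenvalue m j) = 1"
  unfolding bs_eigenvalue_def omega3_def bs_root_pow by simp

lemma bs_eigenvalue_0: "m \<ge> 1 \<Longrightarrow> bs_eigenvalue m 0 = 1"
  unfolding bs_eigenvalue_def by simp

lemma bs_eigenvalue_2m: "bs_eigenvalue m (2 * m) = omega3"
  unfolding bs_eigenvalue_def by simp

lemma bs_eigenvalue_3m: "m \<ge> 1 \<Longrightarrow> bs_eigenvalue m (3 * m) = -1"
  unfolding bs_eigenvalue_def by simp

lemma omega3_cube: "omega3 ^ 3 = 1"
  unfolding omega3_def DeMoivre by simp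

lemma norm_bs_eigenvalue_2m_diff:
  "cmod (bs_eigenvalue m (2 * m) - bs_root m ^ (2 * m)) \<le> 2 * pi / (3 * real (bs_dim m))"
proof -
  have "cmod (bs_eigenvalue m (2 * m) - bs_root m ^ (2 * m))
      \<le> \<bar>2 * pi / 3 - real (2 * m) * (2 * pi / real (bs_dim m))\<bar>"
    unfolding bs_eigenvalue_2m omega3_def bs_root_pow by (rule norm_cis_diff_le)
  also have "2 * pi / 3 - real (2 * m) * (2 * pi / real (bs_dim m)) = 2 * pi / (3 * real (bs_dim m))"
    unfolding bs_dim_def by (simp add: field_simps)
  finally show ?thesis by simp
qed

lemma norm_bs_eigenvalue_3m_diff:
  assumes "m \<ge> 1"
  shows "cmod (bs_eigenvalue m (3 * m) - bs_root m ^ (3 * m)) \<le> pi / real (bs_dim m)"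
proof -
  have "cmod (bs_eigenvalue m (3 * m) - bs_root m ^ (3 * m))
      \<le> \<bar>pi - real (3 * m) * (2 * pi / real (bs_dim m))\<bar>"
    unfolding bs_eigenvalue_3m[OF assms] bs_root_pow using norm_cis_diff_le[of pi] by simp
  also have "pi - real (3 * m) * (2 * pi / real (bs_dim m)) = pi / real (bs_dim m)"
    unfolding bs_dim_def by (simp add: field_simps)
  finally show ?thesis by simp
qed

lemma inv_sqrt2_sq: "inv_sqrt2 * inv_sqrt2 = 1 / 2"
  unfolding inv_sqrt2_def of_real_mult[symmetric] by (simp add: field_simps)

lemma cnj_inv_sqrt2 [simp]: "cnj inv_sqrt2 = inv_sqrt2"
  unfolding inv_sqrt2_def by simp

lemma bs_A_carrier [simp]: "bs_A m \<in> carrier_mat (bs_dim m) (bs_dim m)"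
  unfolding bs_A_def by simp

lemma bs_A_dims [simp]: "dim_row (bs_A m) = bs_dim m" "dim_col (bs_A m) = bs_dim m"
  unfolding bs_A_def by simp_all

lemma bs_B_carrier [simp]: "bs_B m \<in> carrier_mat (bs_dim m) (bs_dim m)"
  unfolding bs_B_def by simp

lemma bs_B_dims [simp]: "dim_row (bs_B m) = bs_dim m" "dim_col (bs_B m) = bs_dim m"
  unfolding bs_B_def by simp_all

lemma index_bs_B [simp]: "i < bs_dim m \<Longrightarrow> j < bs_dim m \<Longrightarrow> bs_B m $$ (i, j) = bs_entry m i j"
  unfolding bs_B_def by simp

lemma unitary_bs_A: "unitary_mat (bs_dim m) (bs_A m)"
  unfolding bs_A_def by (rule unitary_mat_diag) simp

definition bs_eigenvalue_error :: "nat \<Rightarrow> nat \<Rightarrow> real" where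
  "bs_eigenvalue_error m k = cmod (bs_eigenvalue m k - bs_root m ^ k)"

lemma bs_eigenvalue_error_eq_0:
  "k \<noteq> 2 * m \<Longrightarrow> k \<noteq> 3 * m \<Longrightarrow> bs_eigenvalue_error m k = 0"
  unfolding bs_eigenvalue_error_def bs_eigenvalue_def by simp

text \<open>The unperturbed eigenvalues satisfy \<open>(\<zeta>\<^bsup>bs_perm m j\<^esup>)\<^sup>2 = (\<zeta>\<^sup>j)\<^sup>3\<close> exactly.\<close>

lemma norm_bs_eigenvalue_defect_le:
  "cmod ((bs_eigenvalue m (bs_perm m j))\<^sup>2 - (bs_eigenvalue m j) ^ 3)
    \<le> 2 * bs_eigenvalue_error m (bs_perm m j) + 3 * bs_eigenvalue_error m j"
proof -
  let ?x = "bs_eigenvalue m (bs_perm m j)" and ?zx = "bs_root m ^ bs_perm m j"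
  let ?y = "bs_eigenvalue m j" and ?zy = "bs_root m ^ j"
  have "?x\<^sup>2 - ?y ^ 3 = (?x\<^sup>2 - ?zx\<^sup>2) - (?y ^ 3 - ?zy ^ 3)"
    using bs_root_pow_perm[of m j] by simp
  then have "cmod (?x\<^sup>2 - ?y ^ 3) \<le> cmod (?x\<^sup>2 - ?zx\<^sup>2) + cmod (?y ^ 3 - ?zy ^ 3)"
    by (metis norm_triangle_ineq4)
  also have "\<dots> \<le> 2 * cmod (?x - ?zx) + 3 * cmod (?y - ?zy)"
    by (intro add_mono norm_power2_diff_le norm_power3_diff_le) (simp_all add: bs_root_pow)
  finally show ?thesis unfolding bs_eigenvalue_error_def .
qed

lemma index_bs_defect_mat:
  assumes "i < bs_dim m" "j < bs_dim m"
  shows "(bs_A m * bs_A m * bs_B m - bs_B m * (bs_A m * bs_A m * bs_A m)) $$ (i, j)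
    = bs_entry m i j * ((bs_eigenvalue m i)\<^sup>2 - (bs_eigenvalue m j) ^ 3)"
proof -
  have "bs_A m * bs_A m = mat_diag (bs_dim m) (\<lambda>i. (bs_eigenvalue m i)\<^sup>2)"
    "bs_A m * bs_A m * bs_A m = mat_diag (bs_dim m) (\<lambda>i. (bs_eigenvalue m i) ^ 3)"
    unfolding bs_A_def by (simp_all add: power2_eq_square power3_eq_cube)
  then show ?thesis
    using assms index_mat_diag_mult[OF bs_B_carrier] index_mult_mat_diag[OF bs_B_carrier]
    by (simp add: algebra_simps)
qed

context
  fixes m :: nat
  assumes m1: "m \<ge> 1"
begin

lemma bs_index_facts:
  "0 < bs_dim m" "2 * m < bs_dim m" "3 * m < bs_dim m" "0 \<noteq> 2 * m" "0 \<noteq> 3 * m" "2 * m \<noteq> 3 * m"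
  using m1 unfolding bs_dim_def by auto

lemma bs_perm_eq_0_iff: "j < bs_dim m \<Longrightarrow> bs_perm m j = 0 \<longleftrightarrow> j = 0"
  using inj_onD[OF inj_on_bs_perm[of m], of j 0] bs_perm_0[of m] bs_index_facts by auto

lemma bs_perm_eq_3m_iff: "j < bs_dim m \<Longrightarrow> bs_perm m j = 3 * m \<longleftrightarrow> j = 2 * m"
  using inj_onD[OF inj_on_bs_perm[of m], of j "2 * m"] bs_perm_2m[OF m1] bs_index_facts by auto

lemma bs_entry_generic:
  "j \<noteq> 0 \<Longrightarrow> j \<noteq> 2 * m \<Longrightarrow> bs_entry m i j = (if i = bs_perm m j then 1 else 0)"
  unfolding bs_entry_def by simp

lemma bs_entry_special:
  "j = 0 \<or> j = 2 * m \<Longrightarrow> i \<noteq> 0 \<Longrightarrow> i \<noteq> 3 * m \<Longrightarrow> bs_entry m i j = 0"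
  unfolding bs_entry_def by auto

lemma bs_entry_orthonormal:
  assumes i: "i < bs_dim m" and j: "j < bs_dim m"
  shows "(\<Sum>k<bs_dim m. cnj (bs_entry m k i) * bs_entry m k j) = (if i = j then 1 else 0)"
proof (cases "i = 0 \<or> i = 2 * m")
  case False
  then have "(\<Sum>k<bs_dim m. cnj (bs_entry m k i) * bs_entry m k j) = bs_entry m (bs_perm m i) j"
    by (subst sum_lessThan_single[of "bs_perm m i"]) (auto simp: bs_entry_generic bs_perm_lt)
  also have "\<dots> = (if i = j then 1 else 0)"
    using False i j bs_perm_eq_0_iff bs_perm_eq_3m_iff inj_onD[OF inj_on_bs_perm[of m], of i j]
    unfolding bs_entry_def by auto
  finally show ?thesis .
next
  case True
  have "(\<Sum>k<bs_dim m. cnj (bs_entry m k i) * bs_entry m k j)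
      = cnj (bs_entry m 0 i) * bs_entry m 0 j + cnj (bs_entry m (3 * m) i) * bs_entry m (3 * m) j"
    by (intro sum_lessThan_pair) (use bs_index_facts True bs_entry_special in auto)
  also have "\<dots> = (if i = j then 1 else 0)"
  proof (cases "j = 0 \<or> j = 2 * m")
    case False
    then have "bs_entry m 0 j = 0" "bs_entry m (3 * m) j = 0"
      using bs_perm_eq_0_iff[OF j] bs_perm_eq_3m_iff[OF j] by (auto simp: bs_entry_generic)
    then show ?thesis using True False by auto
  next
    case True2: True
    have "bs_entry m 0 0 = inv_sqrt2" "bs_entry m (3 * m) 0 = inv_sqrt2"
      "bs_entry m 0 (2 * m) = inv_sqrt2" "bs_entry m (3 * m) (2 * m) = - inv_sqrt2"
      using bs_index_facts unfolding bs_entry_def by auto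
    then show ?thesis
      using True True2 bs_index_facts by (auto simp: inv_sqrt2_sq)
  qed
  finally show ?thesis .
qed

lemma unitary_bs_B: "unitary_mat (bs_dim m) (bs_B m)"
proof -
  have left: "cadj (bs_B m) * bs_B m = 1\<^sub>m (bs_dim m)"
  proof (rule eq_matI)
    fix i j assume "i < dim_row (1\<^sub>m (bs_dim m))" "j < dim_col (1\<^sub>m (bs_dim m))"
    then have i: "i < bs_dim m" and j: "j < bs_dim m" by auto
    have "(cadj (bs_B m) * bs_B m) $$ (i, j) = (\<Sum>k<bs_dim m. cadj (bs_B m) $$ (i, k) * bs_B m $$ (k, j))"
      using i j by (intro index_mult_mat_sum[of _ "bs_dim m" "bs_dim m"]) auto
    also have "\<dots> = (\<Sum>k<bs_dim m. cnj (bs_entry m k i) * bs_entry m k j)"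
      using i j by (intro sum.cong refl) auto
    finally show "(cadj (bs_B m) * bs_B m) $$ (i, j) = 1\<^sub>m (bs_dim m) $$ (i, j)"
      using bs_entry_orthonormal[OF i j] i j by simp
  qed auto
  have "bs_B m * cadj (bs_B m) = 1\<^sub>m (bs_dim m)"
    by (rule mat_mult_left_right_inverse[OF _ bs_B_carrier left]) simp
  then show ?thesis using left unfolding unitary_mat_def by simp
qed

lemma sum_norm_bs_eigenvalue_defect_le:
  "(\<Sum>j<bs_dim m. (cmod ((bs_eigenvalue m (bs_perm m j))\<^sup>2 - (bs_eigenvalue m j) ^ 3))\<^sup>2)
    \<le> 25 * ((bs_eigenvalue_error m (2 * m))\<^sup>2 + (bs_eigenvalue_error m (3 * m))\<^sup>2)"
proof -
  let ?e = "bs_eigenvalue_error m"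
  have "(\<Sum>j<bs_dim m. (cmod ((bs_eigenvalue m (bs_perm m j))\<^sup>2 - (bs_eigenvalue m j) ^ 3))\<^sup>2)
      \<le> (\<Sum>j<bs_dim m. 10 * (?e (bs_perm m j))\<^sup>2 + 15 * (?e j)\<^sup>2)"
  proof (rule sum_mono)
    fix j
    have "(cmod ((bs_eigenvalue m (bs_perm m j))\<^sup>2 - (bs_eigenvalue m j) ^ 3))\<^sup>2
        \<le> (2 * ?e (bs_perm m j) + 3 * ?e j)\<^sup>2"
      using norm_bs_eigenvalue_defect_le[of m j] by (intro power_mono) auto
    also have "\<dots> \<le> 10 * (?e (bs_perm m j))\<^sup>2 + 15 * (?e j)\<^sup>2"
      using sum_squares_ge_zero[of "?e (bs_perm m j) - ?e j" 0]
      by (simp add: power2_eq_square algebra_simps)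
    finally show "(cmod ((bs_eigenvalue m (bs_perm m j))\<^sup>2 - (bs_eigenvalue m j) ^ 3))\<^sup>2
        \<le> 10 * (?e (bs_perm m j))\<^sup>2 + 15 * (?e j)\<^sup>2" .
  qed
  also have "\<dots> = 10 * (\<Sum>j<bs_dim m. (?e (bs_perm m j))\<^sup>2) + 15 * (\<Sum>j<bs_dim m. (?e j)\<^sup>2)"
    by (simp add: sum.distrib sum_distrib_left)
  also have "(\<Sum>j<bs_dim m. (?e (bs_perm m j))\<^sup>2) = (\<Sum>j<bs_dim m. (?e j)\<^sup>2)"
    using sum.reindex_bij_betw[OF bij_betw_bs_perm[of m], of "\<lambda>k. (?e k)\<^sup>2"] by simp
  also have "(\<Sum>j<bs_dim m. (?e j)\<^sup>2) = (?e (2 * m))\<^sup>2 + (?e (3 * m))\<^sup>2"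
    by (rule sum_lessThan_pair) (use bs_index_facts bs_eigenvalue_error_eq_0 in auto)
  finally show ?thesis by simp
qed

text \<open>Only the entry in row \<open>bs_perm m j\<close> of a column contributes; on the two
  exceptional columns the relation holds exactly.\<close>

lemma sum_bs_defect_column:
  assumes j: "j < bs_dim m"
  shows "(\<Sum>i<bs_dim m. (cmod (bs_entry m i j))\<^sup>2 * (cmod ((bs_eigenvalue m i)\<^sup>2 - (bs_eigenvalue m j) ^ 3))\<^sup>2)
    = (cmod ((bs_eigenvalue m (bs_perm m j))\<^sup>2 - (bs_eigenvalue m j) ^ 3))\<^sup>2"
proof (cases "j = 0 \<or> j = 2 * m")
  case False
  then show ?thesis
    by (subst sum_lessThan_single[of "bs_perm m j"]) (auto simp: bs_entry_generic bs_perm_lt)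
next
  case True
  have cube: "(bs_eigenvalue m j) ^ 3 = 1"
    using True bs_eigenvalue_0[OF m1] bs_eigenvalue_2m[of m] omega3_cube by auto
  have sq: "(bs_eigenvalue m 0)\<^sup>2 = 1" "(bs_eigenvalue m (3 * m))\<^sup>2 = 1"
    using bs_eigenvalue_0[OF m1] bs_eigenvalue_3m[OF m1] by simp_all
  have "bs_perm m j = 0 \<or> bs_perm m j = 3 * m"
    using True bs_perm_0 bs_perm_2m[OF m1] by auto
  then show ?thesis
    using True cube sq bs_index_facts bs_entry_special
    by (subst sum_lessThan_pair[of 0 _ "3 * m"]) auto
qed

lemma frob_norm_bs_defect_le:
  "frob_norm (bs_A m * bs_A m * bs_B m - bs_B m * (bs_A m * bs_A m * bs_A m)) \<le> 8 * pi / real (bs_dim m)"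
proof -
  let ?N = "bs_dim m" and ?e = "bs_eigenvalue_error m"
  let ?M = "bs_A m * bs_A m * bs_B m - bs_B m * (bs_A m * bs_A m * bs_A m)"
  let ?t = "\<lambda>i j. (cmod (bs_entry m i j))\<^sup>2 * (cmod ((bs_eigenvalue m i)\<^sup>2 - (bs_eigenvalue m j) ^ 3))\<^sup>2"
  have "(frob_norm ?M)\<^sup>2 = (\<Sum>i<?N. \<Sum>j<?N. (cmod (?M $$ (i, j)))\<^sup>2)"
    unfolding frob_norm_sq by simp
  also have "\<dots> = (\<Sum>i<?N. \<Sum>j<?N. ?t i j)"
    by (intro sum.cong refl, subst index_bs_defect_mat) (simp_all add: norm_mult power_mult_distrib)
  also have "\<dots> = (\<Sum>j<?N. \<Sum>i<?N. ?t i j)"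
    by (rule sum.swap)
  also have "\<dots> = (\<Sum>j<?N. (cmod ((bs_eigenvalue m (bs_perm m j))\<^sup>2 - (bs_eigenvalue m j) ^ 3))\<^sup>2)"
    by (simp add: sum_bs_defect_column)
  also have "\<dots> \<le> 25 * ((?e (2 * m))\<^sup>2 + (?e (3 * m))\<^sup>2)"
    by (rule sum_norm_bs_eigenvalue_defect_le)
  also have "\<dots> \<le> 25 * ((2 * pi / (3 * real ?N))\<^sup>2 + (pi / real ?N)\<^sup>2)"
    using norm_bs_eigenvalue_2m_diff[of m] norm_bs_eigenvalue_3m_diff[OF m1]
    unfolding bs_eigenvalue_error_def by (intro mult_left_mono add_mono power_mono) auto
  also have "\<dots> = 325 / 9 * (pi / real ?N)\<^sup>2"
    by (simp add: power2_eq_square field_simps)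
  also have "\<dots> \<le> 64 * (pi / real ?N)\<^sup>2"
    by (intro mult_right_mono) auto
  also have "\<dots> = (8 * pi / real ?N)\<^sup>2"
    by (simp add: power2_eq_square)
  finally show ?thesis by (rule power2_le_imp_le) simp
qed

lemma index_bs_conjugate_0_2m: "(cadj (bs_B m) * bs_A m * bs_B m) $$ (0, 2 * m) = 1"
proof -
  let ?N = "bs_dim m"
  have idx: "0 < ?N" "2 * m < ?N" "3 * m < ?N" "0 \<noteq> 3 * m" using bs_index_facts by auto
  have BA: "cadj (bs_B m) * bs_A m \<in> carrier_mat ?N ?N"
    by (meson bs_A_carrier bs_B_carrier cadj_carrier mult_carrier_mat)
  have "(cadj (bs_B m) * bs_A m * bs_B m) $$ (0, 2 * m)
      = (\<Sum>k<?N. (cadj (bs_B m) * bs_A m) $$ (0, k) * bs_B m $$ (k, 2 * m))"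
    using idx by (intro index_mult_mat_sum[OF BA bs_B_carrier])
  also have "\<dots> = (\<Sum>k<?N. cnj (bs_entry m k 0) * bs_eigenvalue m k * bs_entry m k (2 * m))"
    unfolding bs_A_def using idx
    by (intro sum.cong refl, subst index_mult_mat_diag[of _ ?N ?N]) auto
  also have "\<dots> = cnj (bs_entry m 0 0) * bs_eigenvalue m 0 * bs_entry m 0 (2 * m)
      + cnj (bs_entry m (3 * m) 0) * bs_eigenvalue m (3 * m) * bs_entry m (3 * m) (2 * m)"
    by (intro sum_lessThan_pair) (use idx bs_entry_special in auto)
  also have "\<dots> = 1"
    using idx bs_eigenvalue_0[OF m1] bs_eigenvalue_3m[OF m1]
    unfolding bs_entry_def by (simp add: inv_sqrt2_sq)
  finally show ?thesis .
qed

lemma norm_bs_commutator_index_ge: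
  "1 \<le> cmod ((bs_A m * (cadj (bs_B m) * bs_A m * bs_B m)
    - (cadj (bs_B m) * bs_A m * bs_B m) * bs_A m) $$ (0, 2 * m))"
proof -
  let ?C = "cadj (bs_B m) * bs_A m * bs_B m"
  have C: "?C \<in> carrier_mat (bs_dim m) (bs_dim m)"
    by (meson bs_A_carrier bs_B_carrier cadj_carrier mult_carrier_mat)
  have "(bs_A m * ?C - ?C * bs_A m) $$ (0, 2 * m) = (bs_A m * ?C) $$ (0, 2 * m) - (?C * bs_A m) $$ (0, 2 * m)"
    using bs_index_facts C by simp
  also have "\<dots> = bs_eigenvalue m 0 * ?C $$ (0, 2 * m) - ?C $$ (0, 2 * m) * bs_eigenvalue m (2 * m)"
    using bs_index_facts index_mat_diag_mult[OF C] index_mult_mat_diag[OF C]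
    unfolding bs_A_def by simp
  also have "\<dots> = 1 - omega3"
    by (simp add: index_bs_conjugate_0_2m bs_eigenvalue_0[OF m1] bs_eigenvalue_2m)
  finally have "(bs_A m * ?C - ?C * bs_A m) $$ (0, 2 * m) = 1 - omega3" .
  moreover have "Re (1 - omega3) = 3 / 2"
    unfolding omega3_def using cos_120 by simp
  ultimately show ?thesis
    using abs_Re_le_cmod[of "1 - omega3"] by simp
qed

end

lemma homdist_bs_ge:
  assumes m1: "m \<ge> 1" and \<phi>a: "\<phi> Ga = bs_A m" and \<phi>b: "\<phi> Gb = bs_B m"
  shows "1 / 8 \<le> homdist (bs_dim m) {Ga, Gb} [bs23_rel] \<phi>"
proof (rule homdist_ge)
  fix \<rho> assume hom: "is_hom (bs_dim m) {Ga, Gb} [bs23_rel] \<rho>"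
  let ?a = "frob_norm (bs_A m - \<rho> Ga)" and ?b = "frob_norm (bs_B m - \<rho> Gb)"
  let ?C = "cadj (bs_B m) * bs_A m * bs_B m"
  have UA': "unitary_mat (bs_dim m) (\<rho> Ga)" and UB': "unitary_mat (bs_dim m) (\<rho> Gb)"
    using hom unfolding is_hom_def by auto
  have comm: "\<rho> Ga * (cadj (\<rho> Gb) * \<rho> Ga * \<rho> Gb) = (cadj (\<rho> Gb) * \<rho> Ga * \<rho> Gb) * \<rho> Ga"
    using unitary_bs23_relation_commute[OF UA' UB' bs23_relation_of_is_hom[OF hom]] .
  have C: "?C \<in> carrier_mat (bs_dim m) (bs_dim m)"
    by (meson bs_A_carrier bs_B_carrier cadj_carrier mult_carrier_mat)
  have "1 \<le> cmod ((bs_A m * ?C - ?C * bs_A m) $$ (0, 2 * m))"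
    by (rule norm_bs_commutator_index_ge[OF m1])
  also have "\<dots> \<le> frob_norm (bs_A m * ?C - ?C * bs_A m)"
    using bs_index_facts[OF m1] C by (intro norm_index_le_frob_norm) auto
  also have "\<dots> \<le> 4 * ?a + 4 * ?b"
    using frob_norm_commutator_conj_le[OF unitary_bs_A unitary_bs_B[OF m1] UA' UB' comm] .
  finally have "1 / 8 \<le> max ?a ?b" by linarith
  also have "\<dots> \<le> Max (insert 0 ((\<lambda>s. frob_norm (\<phi> s - \<rho> s)) ` {Ga, Gb}))"
    using \<phi>a \<phi>b by simp
  finally show "1 / 8 \<le> Max (insert 0 ((\<lambda>s. frob_norm (\<phi> s - \<rho> s)) ` {Ga, Gb}))" .
qed

definition bs_rep :: "nat \<Rightarrow> bs_gen \<Rightarrow> complex mat" where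
  "bs_rep m g = (case g of Ga \<Rightarrow> bs_A m | Gb \<Rightarrow> bs_B m)"

lemma bs_rep_simps [simp]: "bs_rep m Ga = bs_A m" "bs_rep m Gb = bs_B m"
  unfolding bs_rep_def by simp_all

lemma unitary_bs_rep: "m \<ge> 1 \<Longrightarrow> unitary_mat (bs_dim m) (bs_rep m g)"
  using unitary_bs_A unitary_bs_B by (cases g) auto

lemma defect_bs_rep_le:
  assumes "m \<ge> 1"
  shows "defect (bs_dim m) [bs23_rel] (bs_rep m) \<le> 8 * pi / real m"
proof -
  have "defect (bs_dim m) [bs23_rel] (bs_rep m) \<le> 8 * pi / real (bs_dim m)"
    using defect_bs23_rel[OF unitary_bs_rep[OF assms, of Ga] unitary_bs_rep[OF assms, of Gb]]
      frob_norm_bs_defect_le[OF assms] by simp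
  also have "\<dots> \<le> 8 * pi / real m"
    using assms by (intro divide_left_mono) (auto simp: bs_dim_def)
  finally show ?thesis .
qed

lemma defect_bs_rep_tendsto_0:
  "(\<lambda>n. defect (bs_dim (Suc n)) [bs23_rel] (bs_rep (Suc n))) \<longlonglongrightarrow> 0"
proof (rule tendsto_sandwich[OF _ _ tendsto_const])
  show "\<forall>\<^sub>F n in sequentially. 0 \<le> defect (bs_dim (Suc n)) [bs23_rel] (bs_rep (Suc n))"
    by (simp add: defect_single frob_norm_nonneg)
  show "\<forall>\<^sub>F n in sequentially. defect (bs_dim (Suc n)) [bs23_rel] (bs_rep (Suc n)) \<le> 8 * pi / real (Suc n)"
    by (intro always_eventually allI defect_bs_rep_le) simp
  show "(\<lambda>n. 8 * pi / real (Suc n)) \<longlonglongrightarrow> 0"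
    using tendsto_mult_right_zero[OF LIMSEQ_inverse_real_of_nat, of "8 * pi"]
    by (simp add: divide_inverse)
qed

theorem theorem2p3:
  fixes U :: "nat filter"
  assumes "nonprincipal_ultrafilter U"
  shows "\<not> frobenius_stable U {Ga, Gb} [bs23_rel]"
proof (rule not_frobenius_stable_if_far_from_homs[OF assms])
  show "1 \<le> bs_dim (Suc n) \<and> (\<forall>s\<in>{Ga, Gb}. unitary_mat (bs_dim (Suc n)) (bs_rep (Suc n) s))" for n
    using bs_dim_pos unitary_bs_rep by (simp add: Suc_leI)
  show "(\<lambda>n. defect (bs_dim (Suc n)) [bs23_rel] (bs_rep (Suc n))) \<longlonglongrightarrow> 0"
    by (rule defect_bs_rep_tendsto_0)
  show "1 / 8 \<le> homdist (bs_dim (Suc n)) {Ga, Gb} [bs23_rel] (bs_rep (Suc n))" for n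
    by (rule homdist_bs_ge) simp_all
qed simp

end
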